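(* For $p\ge2$, $\dfrac{1+z_p}{2}\ge\dfrac{p}{p+2}$, equivalently $\dfrac{1+z_p}{1-z_p}\ge\dfrac p2$.
   Context: For $p=\alpha(\alpha+1)$, $\alpha>0$, $L_\alpha$ is the solution on $(-1,1)$ of $(1-s^2)y''-2sy'+py=0$ bounded near $1$ with $L_\alpha(1)=1$, and $z_p$ is its largest zero in $(-1,1)$ (for $p=2$, $L_1(s)=s$, $z_2=0$). *)

theory Defs
  imports "HOL-Analysis.Analysis"
begin

definition is_Legendre :: "real \<Rightarrow> (real \<Rightarrow> real) \<Rightarrow> bool" where
  "is_Legendre \<alpha> y \<longleftrightarrow>
     (\<forall>s\<in>{-1<..<1}. y differentiable at s \<and> deriv y differentiable at s \<and>
        (1 - s\<^sup>2) * deriv (deriv y) s - 2 * s * deriv y s + \<alpha> * (\<alpha> + 1) * y s = 0)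
     \<and> (\<exists>\<delta>>0. \<exists>M. \<forall>s\<in>{1-\<delta><..<1}. \<bar>y s\<bar> \<le> M)
     \<and> (y \<longlongrightarrow> 1) (at_left 1)"

definition is_largest_zero :: "(real \<Rightarrow> real) \<Rightarrow> real \<Rightarrow> bool" where
  "is_largest_zero y z \<longleftrightarrow> z \<in> {-1<..<1} \<and> y z = 0 \<and>
     (\<forall>w\<in>{-1<..<1}. y w = 0 \<longrightarrow> w \<le> z)"

end

theory Submission
  imports Defs
begin

(* Put c = (p - 2)/(p + 2).  Since z is the largest zero of L in (-1,1), it suffices to
   show that L has a zero in [c,1); both claimed inequalities are rearrangements of c \<le> z.

   p = 2 (so \<alpha> = 1):  W(s) = (1 - s^2)(s L'(s) - L(s)) is a first integral of the equation, and
   W(0) = -L(0).  If its constant value C were nonzero, f(s) = -C L(s)/s would satisfy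
   f' = -C^2/((1 - s^2) s^2) \<le> -(C^2/2)/(1 - s), i.e. f would diverge logarithmically at 1,
   contradicting L(1-) = 1.  Hence L(0) = 0 = c.

   p > 2:  suppose L has no zero in [c,1); as L(1-) = 1, L is positive there.  The Riccati-type
   quantity G(t) = (1 - t^2)(t - c)^2 L'(t)/L(t) vanishes at c and satisfies
   G' \<le> (1 - t^2) - p (t - c)^2, so G lies below the cubic Q with this derivative and Q(c) = 0.
   The choice of c gives Q(1) < 0; hence L' \<le> -K/(1 - t) near 1, and L would again diverge
   logarithmically. *)

lemma increment_le_by_derivative:
  fixes f g f' g' :: "real \<Rightarrow> real"
  assumes "a \<le> b"
    and f: "\<And>s. s \<in> {a..b} \<Longrightarrow> (f has_real_derivative f' s) (at s)"
    and g: "\<And>s. s \<in> {a..b} \<Longrightarrow> (g has_real_derivative g' s) (at s)"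
    and le: "\<And>s. a < s \<Longrightarrow> s < b \<Longrightarrow> f' s \<le> g' s"
  shows "f b - f a \<le> g b - g a"
proof -
  have hd: "((\<lambda>s. f s - g s) has_real_derivative f' s - g' s) (at s)" if "s \<in> {a..b}" for s
    using f[OF that] g[OF that] by (rule DERIV_diff)
  have "f b - g b \<le> f a - g a"
  proof (rule DERIV_nonpos_imp_decreasing_open[of a b "\<lambda>s. f s - g s"])
    show "\<exists>y. ((\<lambda>s. f s - g s) has_real_derivative y) (at s) \<and> y \<le> 0" if "a < s" "s < b" for s
      using hd[of s] le[of s] that by auto
    show "continuous_on {a..b} (\<lambda>s. f s - g s)"
      using hd by (intro continuous_at_imp_continuous_on ballI DERIV_isCont) blast
  qed fact
  then show ?thesis by simp
qed

text \<open>A function converging at \<open>1\<^sup>-\<close> cannot satisfy \<open>f'(t) \<le> -K/(1 - t)\<close> near \<open>1\<close>: integrating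
  gives \<open>f(t) \<le> f(t\<^sub>0) + K (ln (1 - t) - ln (1 - t\<^sub>0))\<close>, which tends to \<open>-\<infinity>\<close>.\<close>
lemma no_logarithmic_decay_at_left_1:
  fixes f f' :: "real \<Rightarrow> real" and l K :: real
  assumes lim: "(f \<longlongrightarrow> l) (at_left 1)" and K: "K > 0"
    and decay: "\<forall>\<^sub>F t in at_left 1. (f has_real_derivative f' t) (at t) \<and> f' t \<le> - K / (1 - t)"
  shows False
proof -
  have "\<forall>\<^sub>F t in at_left 1. f t > l - 1"
    using lim by (rule order_tendstoD) simp
  with decay have "\<forall>\<^sub>F t in at_left 1.
      (f has_real_derivative f' t) (at t) \<and> f' t \<le> - K / (1 - t) \<and> f t > l - 1"
    by eventually_elim auto
  then obtain b where "b < 1" and b: "\<And>t. b < t \<Longrightarrow> t < 1 \<Longrightarrow>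
      (f has_real_derivative f' t) (at t) \<and> f' t \<le> - K / (1 - t) \<and> f t > l - 1"
    unfolding eventually_at_left_field by auto
  define t0 where "t0 = (b + 1) / 2"
  have t0: "b < t0" "t0 < 1" using \<open>b < 1\<close> by (auto simp: t0_def)
  define x where "x = (f t0 - l + 2) / K"
  have "x > 0" using b[OF t0] K by (auto simp: x_def)
  define t where "t = 1 - (1 - t0) * exp (- x)"
  have "(1 - t0) * exp (- x) < 1 - t0" using t0 \<open>x > 0\<close> by simp
  moreover have "(1 - t0) * exp (- x) > 0" using t0 by simp
  ultimately have t: "t0 < t" "t < 1" unfolding t_def by auto
  have "f t - f t0 \<le> K * ln (1 - t) - K * ln (1 - t0)"
  proof (rule increment_le_by_derivative[where g' = "\<lambda>s. - K / (1 - s)"])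
    fix s assume s: "s \<in> {t0..t}"
    then show "(f has_real_derivative f' s) (at s)" using b[of s] t t0 by auto
    show "((\<lambda>s. K * ln (1 - s)) has_real_derivative - K / (1 - s)) (at s)"
      using s t by (auto intro!: derivative_eq_intros)
  next
    show "f' s \<le> - K / (1 - s)" if "t0 < s" "s < t" for s using b[of s] that t t0 by auto
  qed (use t in auto)
  also have "ln (1 - t) = ln (1 - t0) - x" using t0 by (simp add: t_def ln_mult)
  finally have "f t \<le> f t0 - K * x" by (simp add: algebra_simps)
  also have "K * x = f t0 - l + 2" using K by (simp add: x_def)
  finally have "f t \<le> l - 2" by simp
  then show False using b[of t] t t0 by auto
qed

lemma positive_if_zero_free:
  fixes f :: "real \<Rightarrow> real"
  assumes lim: "(f \<longlongrightarrow> l) (at_left b)" and "l > 0"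
    and cont: "\<And>s. s \<in> {c..<b} \<Longrightarrow> isCont f s"
    and nz: "\<And>s. s \<in> {c..<b} \<Longrightarrow> f s \<noteq> 0"
    and s: "s \<in> {c..<b}"
  shows "f s > 0"
proof (rule ccontr)
  assume "\<not> f s > 0"
  then have "f s \<le> 0" by simp
  have "\<forall>\<^sub>F t in at_left b. f t > 0"
    using lim \<open>l > 0\<close> by (rule order_tendstoD)
  moreover have "\<forall>\<^sub>F t in at_left b. t \<in> {s<..<b}"
    using s by (intro eventually_at_left_real) auto
  ultimately have "\<forall>\<^sub>F t in at_left b. f t > 0 \<and> t \<in> {s<..<b}"
    by eventually_elim auto
  then obtain t where t: "f t > 0" "s < t" "t < b"
    using eventually_happens'[of "at_left b"] by auto
  have "continuous_on {s..t} f"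
    using t s by (intro continuous_at_imp_continuous_on ballI cont) auto
  then obtain x where "x \<in> {s..t}" "f x = 0"
    using IVT'[of f s 0 t] \<open>f s \<le> 0\<close> t by auto
  then show False using nz s t by auto
qed

lemma is_Legendre_ode:
  assumes "is_Legendre \<alpha> y" and "s \<in> {-1<..<1}"
  shows "(y has_real_derivative deriv y s) (at s)"
    and "(deriv y has_real_derivative deriv (deriv y) s) (at s)"
    and "(1 - s\<^sup>2) * deriv (deriv y) s - 2 * s * deriv y s + \<alpha> * (\<alpha> + 1) * y s = 0"
  using assms unfolding is_Legendre_def by (auto simp: DERIV_deriv_iff_real_differentiable)

lemma is_Legendre_tendsto: "is_Legendre \<alpha> y \<Longrightarrow> (y \<longlongrightarrow> 1) (at_left 1)"
  unfolding is_Legendre_def by auto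

lemma weight_le_twice_distance:
  fixes w t :: real
  assumes "w\<^sup>2 \<le> 1" and "-1 \<le> t" and "t \<le> 1"
  shows "(1 - t\<^sup>2) * w\<^sup>2 \<le> 2 * (1 - t)"
proof -
  have "0 \<le> 1 - t\<^sup>2" using assms(2,3) by (simp add: abs_square_le_1)
  then have "(1 - t\<^sup>2) * w\<^sup>2 \<le> 1 - t\<^sup>2" using assms(1) by (simp add: mult_left_le)
  also have "\<dots> = (1 - t) * (1 + t)" by (simp add: algebra_simps power2_eq_square)
  also have "\<dots> \<le> (1 - t) * 2" using assms(3) by (intro mult_left_mono) auto
  finally show ?thesis by simp
qed

text \<open>For \<open>p = 2\<close> the Legendre equation \<open>(1 - s\<^sup>2) y'' - 2 s y' + 2 y = 0\<close> has the first integral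
  \<open>W(s) = (1 - s\<^sup>2)(s y'(s) - y(s))\<close>: indeed \<open>W' = s ((1 - s\<^sup>2) y'' - 2 s y' + 2 y)\<close>.\<close>
lemma Legendre_1_first_integral:
  assumes L: "is_Legendre 1 y"
  obtains C where "\<And>s. s \<in> {-1<..<1} \<Longrightarrow> (1 - s\<^sup>2) * (s * deriv y s - y s) = C"
proof -
  define W where "W s = (1 - s\<^sup>2) * (s * deriv y s - y s)" for s
  have "(W has_real_derivative 0) (at s)" if s: "s \<in> {-1<..<1}" for s
  proof -
    note y = is_Legendre_ode[OF L s]
    have "(W has_real_derivative -2 * s * (s * deriv y s - y s)
        + (1 - s\<^sup>2) * (deriv y s + s * deriv (deriv y) s - deriv y s)) (at s)"
      unfolding W_def using y(1,2) by (auto intro!: derivative_eq_intros simp: power2_eq_square)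
    also have "-2 * s * (s * deriv y s - y s)
        + (1 - s\<^sup>2) * (deriv y s + s * deriv (deriv y) s - deriv y s)
        = s * ((1 - s\<^sup>2) * deriv (deriv y) s - 2 * s * deriv y s + 1 * (1 + 1) * y s)"
      by (simp add: algebra_simps power2_eq_square)
    finally show ?thesis using y(3) by simp
  qed
  then obtain C where "\<And>s. s \<in> {-1<..<1} \<Longrightarrow> W s = C"
    using has_field_derivative_zero_constant[of "{-1<..<1::real}" W]
    by (auto simp: at_within_open[OF _ open_greaterThanLessThan])
  then show ?thesis using that unfolding W_def by blast
qed

text \<open>The first integral \<open>W\<close> has the constant value \<open>C = W(0) = -y(0)\<close>.
  If \<open>C \<noteq> 0\<close>, then \<open>f(s) = -C y(s)/s\<close> has \<open>f' = -C\<^sup>2/((1 - s\<^sup>2) s\<^sup>2) \<le> -(C\<^sup>2/2)/(1 - s)\<close> on \<open>(0,1)\<close>,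
  a logarithmic decay incompatible with \<open>y(1\<^sup>-) = 1\<close>.\<close>
lemma Legendre_1_vanishes_at_0:
  fixes y :: "real \<Rightarrow> real"
  assumes L: "is_Legendre 1 y"
  shows "y 0 = 0"
proof -
  obtain C where C: "\<And>s. s \<in> {-1<..<1} \<Longrightarrow> (1 - s\<^sup>2) * (s * deriv y s - y s) = C"
    using Legendre_1_first_integral[OF L] by blast
  have "C = 0"
  proof (rule ccontr)
    assume "C \<noteq> 0"
    define f where "f s = - C * (y s / s)" for s
    have decay: "(f has_real_derivative - C\<^sup>2 / ((1 - s\<^sup>2) * s\<^sup>2)) (at s)
        \<and> - C\<^sup>2 / ((1 - s\<^sup>2) * s\<^sup>2) \<le> - (C\<^sup>2 / 2) / (1 - s)" if s: "s \<in> {0<..<1}" for s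
    proof
      have s': "s \<in> {-1<..<1}" and "s\<^sup>2 < 1" using s by (auto simp: abs_square_less_1)
      then have "s * deriv y s - y s = C / (1 - s\<^sup>2)" using C[OF s'] by (simp add: field_simps)
      moreover have "(f has_real_derivative - C * ((deriv y s * s - y s * 1) / (s * s))) (at s)"
        unfolding f_def using is_Legendre_ode(1)[OF L s'] s
        by (auto intro!: derivative_eq_intros simp: field_simps)
      ultimately show "(f has_real_derivative - C\<^sup>2 / ((1 - s\<^sup>2) * s\<^sup>2)) (at s)"
        by (simp add: mult.commute power2_eq_square)
      have "(1 - s\<^sup>2) * s\<^sup>2 \<le> 2 * (1 - s)"
        using s \<open>s\<^sup>2 < 1\<close> by (intro weight_le_twice_distance) auto
      then have "C\<^sup>2 / (2 * (1 - s)) \<le> C\<^sup>2 / ((1 - s\<^sup>2) * s\<^sup>2)"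
        using s \<open>s\<^sup>2 < 1\<close> by (intro frac_le) auto
      then show "- C\<^sup>2 / ((1 - s\<^sup>2) * s\<^sup>2) \<le> - (C\<^sup>2 / 2) / (1 - s)" by simp
    qed
    have "(f \<longlongrightarrow> - C * (1 / 1)) (at_left 1)"
      unfolding f_def by (intro tendsto_intros is_Legendre_tendsto[OF L]) auto
    moreover have "C\<^sup>2 / 2 > 0" using \<open>C \<noteq> 0\<close> by simp
    moreover have "\<forall>\<^sub>F s in at_left 1. s \<in> {0<..<1::real}"
      by (intro eventually_at_left_real) simp
    then have "\<forall>\<^sub>F s in at_left 1. (f has_real_derivative - C\<^sup>2 / ((1 - s\<^sup>2) * s\<^sup>2)) (at s)
        \<and> - C\<^sup>2 / ((1 - s\<^sup>2) * s\<^sup>2) \<le> - (C\<^sup>2 / 2) / (1 - s)"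
      by eventually_elim (rule decay)
    ultimately show False by (rule no_logarithmic_decay_at_left_1)
  qed
  then show "y 0 = 0" using C[of 0] by simp
qed

text \<open>If \<open>y\<close> solves
  \<open>(1 - t\<^sup>2) y'' - 2 t y' + p y = 0\<close> and \<open>y(t) > 0\<close>, then the derivative of the weighted logarithmic
  derivative \<open>G = (1 - t\<^sup>2)(t - c)\<^sup>2 y'/y\<close> at \<open>t\<close> (written out on the left, with \<open>y\<^sub>0, y\<^sub>1, y\<^sub>2\<close> the
  values of \<open>y, y', y''\<close>) is at most \<open>(1 - t\<^sup>2) - p (t - c)\<^sup>2\<close>.  With \<open>u = (t - c) y\<^sub>1/y\<^sub>0\<close> the
  difference is \<open>(1 - t\<^sup>2)(1 - u)\<^sup>2 \<ge> 0\<close>.\<close>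
lemma Riccati_weight_derivative_bound:
  fixes t c p y0 y1 y2 :: real
  assumes ode: "(1 - t\<^sup>2) * y2 - 2 * t * y1 + p * y0 = 0" and "y0 > 0" and "t\<^sup>2 \<le> 1"
  shows "- 2 * t * (t - c)\<^sup>2 * (y1 / y0) + (1 - t\<^sup>2) * (2 * (t - c)) * (y1 / y0)
      + (1 - t\<^sup>2) * (t - c)\<^sup>2 * ((y2 * y0 - y1 * y1) / y0\<^sup>2) \<le> (1 - t\<^sup>2) - p * (t - c)\<^sup>2"
proof -
  define r where "r = y1 / y0"
  define u where "u = (t - c) * r"
  have y2: "(1 - t\<^sup>2) * (y2 / y0) = 2 * t * r - p"
    using ode \<open>y0 > 0\<close> by (simp add: r_def field_simps)
  have y1y2: "(y2 * y0 - y1 * y1) / y0\<^sup>2 = y2 / y0 - r\<^sup>2"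
    using \<open>y0 > 0\<close> by (simp add: r_def field_simps power2_eq_square)
  have "- 2 * t * (t - c)\<^sup>2 * (y1 / y0) + (1 - t\<^sup>2) * (2 * (t - c)) * (y1 / y0)
      + (1 - t\<^sup>2) * (t - c)\<^sup>2 * ((y2 * y0 - y1 * y1) / y0\<^sup>2)
      = - 2 * t * (t - c)\<^sup>2 * r + (1 - t\<^sup>2) * (2 * (t - c)) * r
        + (t - c)\<^sup>2 * ((1 - t\<^sup>2) * (y2 / y0)) - (1 - t\<^sup>2) * (t - c)\<^sup>2 * r\<^sup>2"
    unfolding r_def[symmetric] y1y2 by (simp add: algebra_simps)
  also have "\<dots> = (1 - t\<^sup>2) - p * (t - c)\<^sup>2 - (1 - t\<^sup>2) * (1 - u)\<^sup>2"
    unfolding y2 u_def by (simp add: algebra_simps power2_eq_square)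
  also have "\<dots> \<le> (1 - t\<^sup>2) - p * (t - c)\<^sup>2"
    using \<open>t\<^sup>2 \<le> 1\<close> by simp
  finally show ?thesis .
qed

text \<open>The comparison function for the Riccati inequality: the cubic with
  derivative \<open>(1 - t\<^sup>2) - p (t - c)\<^sup>2\<close> vanishing at \<open>t = c\<close>.\<close>
definition comparison_cubic :: "real \<Rightarrow> real \<Rightarrow> real \<Rightarrow> real" where
  "comparison_cubic p c t = t - t ^ 3 / 3 - p * (t - c) ^ 3 / 3 - (c - c ^ 3 / 3)"

lemma comparison_cubic_has_derivative:
  "(comparison_cubic p c has_real_derivative (1 - t\<^sup>2) - p * (t - c)\<^sup>2) (at t)"
  unfolding comparison_cubic_def by (auto intro!: derivative_eq_intros simp: power2_eq_square)

text \<open>The choice \<open>c = (p - 2)/(p + 2)\<close> is exactly the one making \<open>Q(1) < 0\<close> for \<open>p > 2\<close>: one has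
  \<open>3 Q(1) = (1 - c)\<^sup>2 (3 - (p + 1)(1 - c))\<close> and \<open>(p + 1)(1 - c) = 4 (p + 1)/(p + 2) > 3\<close>.\<close>
lemma comparison_cubic_negative_at_1:
  fixes p :: real
  assumes "p > 2"
  shows "comparison_cubic p ((p - 2) / (p + 2)) 1 < 0"
proof -
  define c where "c = (p - 2) / (p + 2)"
  have c: "0 < c" "c < 1" using assms by (auto simp: c_def field_simps)
  have "(1 - c) * (p + 2) = 4" using assms by (simp add: c_def field_simps)
  then have "3 * (p + 2) < ((p + 1) * (1 - c)) * (p + 2)"
    unfolding mult.assoc using assms by simp
  then have "3 < (p + 1) * (1 - c)" by (rule mult_right_less_imp_less) (use assms in simp)
  then have "(1 - c)\<^sup>2 * (3 - (p + 1) * (1 - c)) < 0" using c by (intro mult_pos_neg) auto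
  moreover have "comparison_cubic p c 1 = (1 - c)\<^sup>2 * (3 - (p + 1) * (1 - c)) / 3"
    by (simp add: comparison_cubic_def field_simps power2_eq_square power3_eq_cube)
  ultimately show ?thesis by (simp add: c_def)
qed

text \<open>Riccati comparison: if the Legendre function \<open>y\<close> is positive on \<open>[c,1)\<close>, then
  \<open>G(t) = (1 - t\<^sup>2)(t - c)\<^sup>2 y'(t)/y(t)\<close> stays below the comparison cubic there, since both vanish
  at \<open>c\<close> and \<open>G'\<close> is bounded by the derivative of the cubic.\<close>
lemma Riccati_comparison:
  fixes \<alpha> p c t :: real and y :: "real \<Rightarrow> real"
  assumes p: "p = \<alpha> * (\<alpha> + 1)" and L: "is_Legendre \<alpha> y" and "-1 < c"
    and pos: "\<And>s. s \<in> {c..<1} \<Longrightarrow> y s > 0" and t: "t \<in> {c..<1}"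
  shows "(1 - t\<^sup>2) * (t - c)\<^sup>2 * (deriv y t / y t) \<le> comparison_cubic p c t"
proof -
  define G where "G s = (1 - s\<^sup>2) * (s - c)\<^sup>2 * (deriv y s / y s)" for s
  have "G t - G c \<le> comparison_cubic p c t - comparison_cubic p c c"
  proof (rule increment_le_by_derivative[where g' = "\<lambda>s. (1 - s\<^sup>2) - p * (s - c)\<^sup>2"])
    fix s assume "s \<in> {c..t}"
    then have s: "s \<in> {-1<..<1}" "y s > 0" using t \<open>-1 < c\<close> pos[of s] by auto
    show "(G has_real_derivative - 2 * s * (s - c)\<^sup>2 * (deriv y s / y s)
        + (1 - s\<^sup>2) * (2 * (s - c)) * (deriv y s / y s)
        + (1 - s\<^sup>2) * (s - c)\<^sup>2 * ((deriv (deriv y) s * y s - deriv y s * deriv y s) / (y s)\<^sup>2)) (at s)"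
      unfolding G_def using is_Legendre_ode(1,2)[OF L s(1)] s(2)
      by (auto intro!: derivative_eq_intros simp: field_simps power2_eq_square)
  next
    fix s assume "c < s" "s < t"
    then have s: "s \<in> {-1<..<1}" "y s > 0" using t \<open>-1 < c\<close> pos[of s] by auto
    then show "- 2 * s * (s - c)\<^sup>2 * (deriv y s / y s) + (1 - s\<^sup>2) * (2 * (s - c)) * (deriv y s / y s)
        + (1 - s\<^sup>2) * (s - c)\<^sup>2 * ((deriv (deriv y) s * y s - deriv y s * deriv y s) / (y s)\<^sup>2)
        \<le> (1 - s\<^sup>2) - p * (s - c)\<^sup>2"
      using is_Legendre_ode(3)[OF L s(1)] unfolding p[symmetric]
      by (intro Riccati_weight_derivative_bound) (auto simp: abs_square_le_1)
  qed (use t comparison_cubic_has_derivative in auto)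
  then show ?thesis by (simp add: G_def comparison_cubic_def)
qed

text \<open>The case \<open>p > 2\<close>: with \<open>c = (p - 2)/(p + 2)\<close>, a Legendre function cannot stay positive on
  \<open>[c,1)\<close>.  By the Riccati comparison, \<open>G \<le> Q(1)/2 < 0\<close> near \<open>1\<close>; as \<open>y > 1/2\<close> there and the
  weight of \<open>G\<close> is at most \<open>2 (1 - t)\<close>, this gives \<open>y' \<le> -K/(1 - t)\<close>, which \<open>y(1\<^sup>-) = 1\<close> forbids.\<close>
lemma Legendre_not_positive_near_1:
  fixes \<alpha> p :: real and y :: "real \<Rightarrow> real"
  assumes "p > 2" and p: "p = \<alpha> * (\<alpha> + 1)" and L: "is_Legendre \<alpha> y"
    and pos: "\<And>s. s \<in> {(p - 2) / (p + 2)..<1} \<Longrightarrow> y s > 0"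
  shows False
proof -
  define c where "c = (p - 2) / (p + 2)"
  have c: "0 < c" "c < 1" using \<open>p > 2\<close> by (auto simp: c_def field_simps)
  define Q where "Q = comparison_cubic p c"
  define K where "K = - Q 1 / 8"
  have "K > 0" using comparison_cubic_negative_at_1[OF \<open>p > 2\<close>] by (simp add: K_def Q_def c_def)
  have "(Q \<longlongrightarrow> Q 1) (at_left 1)"
    using comparison_cubic_has_derivative[THEN DERIV_isCont]
    by (simp add: Q_def isCont_def filterlim_at_split)
  then have "\<forall>\<^sub>F t in at_left 1. Q t < Q 1 / 2"
    using \<open>K > 0\<close> by (intro order_tendstoD) (auto simp: K_def)
  moreover have "\<forall>\<^sub>F t in at_left 1. y t > 1 / 2"
    using is_Legendre_tendsto[OF L] by (rule order_tendstoD) simp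
  moreover have "\<forall>\<^sub>F t in at_left 1. t \<in> {c<..<1}"
    using c by (intro eventually_at_left_real) auto
  ultimately have "\<forall>\<^sub>F t in at_left 1.
      (y has_real_derivative deriv y t) (at t) \<and> deriv y t \<le> - K / (1 - t)"
  proof eventually_elim
    case (elim t)
    then have t: "t \<in> {-1<..<1}" "t \<in> {c..<1}" "y t > 1 / 2" using c by auto
    define A where "A = (1 - t\<^sup>2) * (t - c)\<^sup>2"
    have "0 < A" using elim c by (auto simp: A_def abs_square_less_1)
    have A_le: "A \<le> 2 * (1 - t)"
      unfolding A_def using elim c by (intro weight_le_twice_distance) (auto simp: abs_square_le_1)
    have "A * (deriv y t / y t) \<le> Q t"
      unfolding A_def Q_def using c pos
      by (intro Riccati_comparison[OF p L _ _ t(2)]) (auto simp: c_def)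
    also have "\<dots> < - 4 * K" using elim by (simp add: K_def)
    finally have "A * deriv y t < - 4 * K * y t" using t by (simp add: field_simps)
    also have "\<dots> < - 2 * K" using t \<open>K > 0\<close> by simp
    finally have "deriv y t < - (2 * K) / A" using \<open>0 < A\<close> by (simp add: field_simps)
    also have "\<dots> \<le> - (2 * K) / (2 * (1 - t))"
      using \<open>0 < A\<close> A_le \<open>K > 0\<close> by (simp add: frac_le)
    also have "\<dots> = - K / (1 - t)" using elim by (simp add: field_simps)
    finally show ?case using is_Legendre_ode(1)[OF L t(1)] by simp
  qed
  with is_Legendre_tendsto[OF L] \<open>K > 0\<close> show False by (rule no_logarithmic_decay_at_left_1)
qed

lemma Legendre_zero_in_tail:
  fixes \<alpha> p :: real and L :: "real \<Rightarrow> real"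
  assumes "\<alpha> > 0" and p: "p = \<alpha> * (\<alpha> + 1)" and "p \<ge> 2" and L: "is_Legendre \<alpha> L"
  shows "\<exists>w \<in> {(p - 2) / (p + 2)..<1}. L w = 0"
proof (cases "p = 2")
  case True
  then have "(\<alpha> - 1) * (\<alpha> + 2) = 0" using p by (simp add: algebra_simps)
  then have "\<alpha> = 1" using \<open>\<alpha> > 0\<close> by auto
  then have "L 0 = 0" using Legendre_1_vanishes_at_0 L by simp
  then show ?thesis using True by auto
next
  case False
  then have "p > 2" using \<open>p \<ge> 2\<close> by simp
  show ?thesis
  proof (rule ccontr)
    assume no_zero: "\<not> ?thesis"
    have c: "(p - 2) / (p + 2) \<ge> 0" using \<open>p > 2\<close> by simp
    have "L s > 0" if s: "s \<in> {(p - 2) / (p + 2)..<1}" for s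
    proof (rule positive_if_zero_free[OF is_Legendre_tendsto[OF L] _ _ _ s])
      fix t assume "t \<in> {(p - 2) / (p + 2)..<1}"
      then show "isCont L t" "L t \<noteq> 0"
        using no_zero c is_Legendre_ode(1)[OF L, of t] DERIV_isCont by auto
    qed simp
    with \<open>p > 2\<close> p L show False by (rule Legendre_not_positive_near_1)
  qed
qed

theorem lemma5p6:
  fixes \<alpha> p z :: real and L :: "real \<Rightarrow> real"
  assumes "\<alpha> > 0" and "p = \<alpha> * (\<alpha> + 1)" and "p \<ge> 2"
    and "is_Legendre \<alpha> L" and "is_largest_zero L z"
  shows "(1 + z) / 2 \<ge> p / (p + 2) \<and> (1 + z) / (1 - z) \<ge> p / 2"
proof -
  obtain w where w: "w \<in> {(p - 2) / (p + 2)..<1}" "L w = 0"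
    using Legendre_zero_in_tail[OF assms(1-4)] by blast
  have z: "z \<in> {-1<..<1}" "\<And>v. v \<in> {-1<..<1} \<Longrightarrow> L v = 0 \<Longrightarrow> v \<le> z"
    using assms(5) unfolding is_largest_zero_def by auto
  have "(p - 2) / (p + 2) \<ge> 0" using \<open>p \<ge> 2\<close> by simp
  then have "(p - 2) / (p + 2) \<le> z" using w z(2)[of w] by auto
  then have c_le_z: "p - 2 \<le> z * (p + 2)"
    using \<open>p \<ge> 2\<close> by (simp add: divide_le_eq)
  have "p / (p + 2) \<le> (1 + z) / 2"
    using c_le_z \<open>p \<ge> 2\<close> by (simp add: divide_simps) (simp add: algebra_simps)
  moreover have "p / 2 \<le> (1 + z) / (1 - z)"
    using c_le_z z(1) by (simp add: divide_simps) (simp add: algebra_simps)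
  ultimately show ?thesis by simp
qed

end
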